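(* Let $Y_1,Y_2,\ldots$ be i.i.d. Bernoulli$(1/2)$ and let $(Z^k)_k$ be generated by the bit-drop scheme described in the context, independently of $(Y_i)$. For $0\le k\le n$ let $L^a_n(k)$ be the length of a longest common subsequence of $Z^k$ and $Y_1\ldots Y_n$. Let $E^n_1:=\bigcap_{k=1}^{\lfloor 0.45n\rfloor}\{L^a_n(k)=k\}$. Then $\lim_{n\to\infty}P(E^n_1)=1$.
   Context: Bit-drop scheme: let $V_1,V_2,\ldots$ be i.i.d. Bernoulli$(1/2)$ and let $T_3,T_4,\ldots$ be independent, independent of $(V_k)$, with $T_{k+1}$ uniform on $\{2,\ldots,k\}$. Set $Z^2:=V_1V_2$ and, given $Z^k=Z^k_1\ldots Z^k_k$, define $Z^{k+1}_j:=Z^k_j$ for $j<T_{k+1}$, $Z^{k+1}_{T_{k+1}}:=V_{k+1}$, $Z^{k+1}_j:=Z^k_{j-1}$ for $T_{k+1}<j\le k+1$. Convention: $Z^0$ empty, $Z^1:=V_1$. *)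

theory Defs
  imports "HOL-Probability.Probability" "HOL-Library.Sublist"
begin

definition lcs_len :: "'a list \<Rightarrow> 'a list \<Rightarrow> nat" where
  "lcs_len a b = Max {length c | c. subseq c a \<and> subseq c b}"

definition bitdrop_step :: "bool list \<Rightarrow> nat \<Rightarrow> bool \<Rightarrow> bool list" where
  "bitdrop_step z t v = take (t - 1) z @ [v] @ drop (t - 1) z"

text \<open>Z^k built from V_1, V_2, ... and T_3, T_4, ... (functions indexed from 1).\<close>
fun bitdrop_Z :: "(nat \<Rightarrow> bool) \<Rightarrow> (nat \<Rightarrow> nat) \<Rightarrow> nat \<Rightarrow> bool list" where
  "bitdrop_Z V T 0 = []"
| "bitdrop_Z V T (Suc 0) = [V 1]"
| "bitdrop_Z V T (Suc (Suc 0)) = [V 1, V 2]"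
| "bitdrop_Z V T (Suc (Suc (Suc k))) =
     bitdrop_step (bitdrop_Z V T (Suc (Suc k))) (T (k + 3)) (V (k + 3))"

text \<open>Joint law of (V_1..V_n), (T_3..T_n), (Y_1..Y_n): all independent,
  V_i, Y_i Bernoulli(1/2), T_k uniform on {2..k-1}.  Coordinates outside the
  index ranges are fixed defaults and irrelevant.\<close>
definition bitdrop_law :: "nat \<Rightarrow> ((nat \<Rightarrow> bool) \<times> (nat \<Rightarrow> nat) \<times> (nat \<Rightarrow> bool)) pmf" where
  "bitdrop_law n =
     pair_pmf (Pi_pmf {1..n} False (\<lambda>_. bernoulli_pmf (1/2)))
       (pair_pmf (Pi_pmf {3..n} 0 (\<lambda>k. pmf_of_set {2..k - 1}))
                 (Pi_pmf {1..n} False (\<lambda>_. bernoulli_pmf (1/2))))"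

definition E1 :: "nat \<Rightarrow> ((nat \<Rightarrow> bool) \<times> (nat \<Rightarrow> nat) \<times> (nat \<Rightarrow> bool)) set" where
  "E1 n = {(V, T, Y). \<forall>k \<in> {1..nat \<lfloor>(45/100) * real n\<rfloor>}.
             lcs_len (bitdrop_Z V T k) (map Y [1..<n+1]) = k}"

end

theory Submission
  imports Defs "HOL-Real_Asymp.Real_Asymp"
begin

text \<open>The bit-drop scheme only ever inserts bits, so \<open>Z\<^sup>k\<close> is a subsequence of \<open>Z\<^sup>m\<close> for
  \<open>k \<le> m = \<lfloor>0.45 n\<rfloor>\<close>; hence \<open>E\<^sup>n\<^sub>1\<close> contains the event that \<open>Z\<^sup>m\<close> is a subsequence
  of \<open>Y\<^sub>1\<dots>Y\<^sub>n\<close>. For any fixed word \<open>X\<close>, matching \<open>X\<close> greedily against fair coin flips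
  advances with probability \<open>1/2\<close> at each flip, independently of the past, so
  \<open>X\<close> is a subsequence of \<open>Y\<^sub>1\<dots>Y\<^sub>n\<close> with probability \<open>P(Bin(n,1/2) \<ge> |X|)\<close>. As \<open>Y\<close> is
  independent of \<open>Z\<^sup>m\<close>, the event has probability \<open>P(Bin(n,1/2) \<ge> m)\<close>, which is at least
  \<open>1 - exp(-n/200)\<close> by Hoeffding's inequality.\<close>

lemma length_bitdrop_step [simp]: "length (bitdrop_step z t v) = Suc (length z)"
  unfolding bitdrop_step_def by simp

lemma subseq_bitdrop_step: "subseq z (bitdrop_step z t v)"
proof -
  have "subseq (take (t - 1) z @ drop (t - 1) z) (take (t - 1) z @ ([v] @ drop (t - 1) z))"
    by (intro list_emb_append_mono) auto
  then show ?thesis unfolding bitdrop_step_def by simp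
qed

lemma length_bitdrop_Z [simp]: "length (bitdrop_Z V T k) = k"
  by (induction V T k rule: bitdrop_Z.induct) auto

lemma subseq_bitdrop_Z_Suc: "subseq (bitdrop_Z V T k) (bitdrop_Z V T (Suc k))"
  by (induction V T k rule: bitdrop_Z.induct) (simp_all add: subseq_bitdrop_step)

lemma subseq_bitdrop_Z_mono:
  assumes "k \<le> m" shows "subseq (bitdrop_Z V T k) (bitdrop_Z V T m)"
  using assms
proof (induction m rule: dec_induct)
  case (step m)
  then show ?case using subseq_bitdrop_Z_Suc subseq_order.order_trans by blast
qed simp

lemma lcs_len_subseq:
  assumes "subseq a b" shows "lcs_len a b = length a"
proof -
  have "finite {length c | c. subseq c a \<and> subseq c b}"
    by (rule finite_subset[of _ "{..length a}"]) (auto dest: list_emb_length)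
  then show ?thesis unfolding lcs_len_def
    by (rule Max_eqI) (use assms in \<open>auto dest: list_emb_length\<close>)
qed

lemma emeasure_pair_pmf:
  "emeasure (pair_pmf A B) S = (\<integral>\<^sup>+a. emeasure B {b. (a, b) \<in> S} \<partial>A)"
proof -
  have "emeasure (pair_pmf A B) S = (\<integral>\<^sup>+a. \<integral>\<^sup>+b. indicator S (a, b) \<partial>B \<partial>A)"
    by (simp flip: nn_integral_pair_pmf')
  also have "\<dots> = (\<integral>\<^sup>+a. \<integral>\<^sup>+b. indicator {b. (a, b) \<in> S} b \<partial>B \<partial>A)"
    by (intro nn_integral_cong) (simp add: indicator_def)
  finally show ?thesis by simp
qed

lemma emeasure_binomial_pmf_half_Suc_atLeast:
  "emeasure (binomial_pmf (Suc n) (1/2)) {Suc m..} =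
     (emeasure (binomial_pmf n (1/2)) {m..} + emeasure (binomial_pmf n (1/2)) {Suc m..}) / 2"
proof -
  let ?B = "binomial_pmf n (1/2)"
  have "emeasure (binomial_pmf (Suc n) (1/2)) {Suc m..} =
    (\<integral>\<^sup>+b. emeasure ?B ((\<lambda>k. (if b then 1 else 0) + k) -` {Suc m..}) \<partial>bernoulli_pmf (1/2))"
    by (simp add: binomial_pmf_Suc map_pmf_def [symmetric] del: emeasure_map_pmf) simp
  also have "\<dots> = emeasure ?B ((\<lambda>k. 1 + k) -` {Suc m..}) * ennreal (1/2)
      + emeasure ?B ((\<lambda>k. 0 + k) -` {Suc m..}) * ennreal (1 - 1/2)"
    by (subst nn_integral_bernoulli_pmf) auto
  also have "(\<lambda>k::nat. 1 + k) -` {Suc m..} = {m..}" by auto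
  also have "(\<lambda>k::nat. 0 + k) -` {Suc m..} = {Suc m..}" by auto
  finally show ?thesis
    by (simp add: ennreal_divide_times divide_ennreal_def add_divide_distrib_ennreal distrib_right)
qed

lemma emeasure_Pi_pmf_fair_coins_subseq:
  "emeasure (Pi_pmf {a..<a+n} False (\<lambda>_. bernoulli_pmf (1/2))) {Y. subseq X (map Y [a..<a+n])} =
   emeasure (binomial_pmf n (1/2)) {length X..}"
proof (induction n arbitrary: a X)
  case 0
  show ?case by (cases X) (simp_all add: indicator_def binomial_pmf_0)
next
  case (Suc n)
  let ?P = "Pi_pmf {Suc a..<Suc a+n} False (\<lambda>_. bernoulli_pmf (1/2))"
  let ?B = "binomial_pmf n (1/2)"
  show ?case
  proof (cases X)
    case Nil
    then show ?thesis by (simp add: measure_pmf.emeasure_space_1[simplified])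
  next
    case (Cons x X')
    have coins_insert: "{a..<a+Suc n} = insert a {Suc a..<Suc a+n}" by auto
    have preimage: "(\<lambda>(y, f). f(a := y)) -` {Y. subseq X (map Y [a..<a+Suc n])}
         = {(y, f). subseq X (y # map f [Suc a..<Suc a+n])}"
      by (auto simp: upt_conv_Cons simp del: upt_Suc)
    have first_coin: "emeasure ?P {f. subseq X (y # map f [Suc a..<Suc a+n])} =
        (if x = y then emeasure ?B {length X'..} else emeasure ?B {Suc (length X')..})" for y
      using Suc.IH[of "Suc a" X'] Suc.IH[of "Suc a" X] Cons by (cases "x = y") (simp_all del: upt_Suc)
    have "emeasure (Pi_pmf {a..<a+Suc n} False (\<lambda>_. bernoulli_pmf (1/2)))
            {Y. subseq X (map Y [a..<a+Suc n])}
        = emeasure (pair_pmf (bernoulli_pmf (1/2)) ?P)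
            ((\<lambda>(y, f). f(a := y)) -` {Y. subseq X (map Y [a..<a+Suc n])})"
      unfolding coins_insert by (subst Pi_pmf_insert) auto
    also have "\<dots> = (\<integral>\<^sup>+y. emeasure ?P {f. subseq X (y # map f [Suc a..<Suc a+n])}
                   \<partial>bernoulli_pmf (1/2))"
      unfolding preimage emeasure_pair_pmf by (simp del: upt_Suc)
    also have "\<dots> = (emeasure ?B {length X'..} + emeasure ?B {Suc (length X')..}) / 2"
      unfolding first_coin
      by (cases x) (simp_all add: ennreal_divide_times divide_ennreal_def distrib_right add.commute)
    also have "\<dots> = emeasure (binomial_pmf (Suc n) (1/2)) {length X..}"
      using Cons by (simp add: emeasure_binomial_pmf_half_Suc_atLeast)
    finally show ?thesis .
  qed
qed

lemma prob_binomial_pmf_atLeast_ge: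
  assumes p: "p \<in> {0..1}" and \<epsilon>: "\<epsilon> \<ge> 0" and m: "real m \<le> (p - \<epsilon>) * real n"
  shows "measure_pmf.prob (binomial_pmf n p) {m..} \<ge> 1 - exp (-2 * real n * \<epsilon>\<^sup>2)"
proof (cases "n = 0")
  case True
  then show ?thesis by simp
next
  case False
  have "measure_pmf.prob (binomial_pmf n p) {..<m} \<le>
        measure_pmf.prob (binomial_pmf n p) {x. real x / real n \<le> p - \<epsilon>}"
    using m False by (intro measure_pmf.finite_measure_mono) (auto simp: field_simps)
  also have "\<dots> \<le> exp (-2 * real n * \<epsilon>\<^sup>2)"
    using binomial_distribution.prob_le'[of p n \<epsilon>] p \<epsilon> False
    by (simp add: binomial_distribution_def)
  finally show ?thesis
    using measure_pmf.prob_compl[of "{..<m}" "binomial_pmf n p"]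
    by (simp add: Compl_eq_Diff_UNIV [symmetric])
qed

lemma prob_bitdrop_law_subseq:
  "measure_pmf.prob (bitdrop_law n) {(V, T, Y). subseq (bitdrop_Z V T m) (map Y [1..<n+1])} =
   measure_pmf.prob (binomial_pmf n (1/2)) {m..}"
proof -
  let ?coins = "Pi_pmf {1..n} False (\<lambda>_. bernoulli_pmf (1/2))"
  let ?drops = "Pi_pmf {3..n} 0 (\<lambda>k. pmf_of_set {2..k - 1})"
  have Y_range: "{1..n} = {1..<1+n}" "[1..<n+1] = [1..<1+n]" by auto
  have "emeasure (bitdrop_law n) {(V, T, Y). subseq (bitdrop_Z V T m) (map Y [1..<n+1])} =
     (\<integral>\<^sup>+V. \<integral>\<^sup>+T. emeasure ?coins {Y. subseq (bitdrop_Z V T m) (map Y [1..<n+1])} \<partial>?drops \<partial>?coins)"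
    unfolding bitdrop_law_def emeasure_pair_pmf by simp
  also have "\<dots> = emeasure (binomial_pmf n (1/2)) {m..}"
    unfolding Y_range emeasure_Pi_pmf_fair_coins_subseq
    by (simp add: measure_pmf.emeasure_space_1[simplified])
  finally show ?thesis by (simp add: measure_pmf.emeasure_eq_measure)
qed

lemma subseq_bitdrop_Z_subset_E1:
  "{(V, T, Y). subseq (bitdrop_Z V T (nat \<lfloor>(45/100) * real n\<rfloor>)) (map Y [1..<n+1])} \<subseteq> E1 n"
  unfolding E1_def
  using subseq_bitdrop_Z_mono subseq_order.order_trans by (fastforce simp: lcs_len_subseq)

lemma prob_E1_ge: "measure_pmf.prob (bitdrop_law n) (E1 n) \<ge> 1 - exp (-2 * real n * (1/20)\<^sup>2)"
proof -
  define m where "m = nat \<lfloor>(45/100) * real n\<rfloor>"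
  have "real m \<le> (1/2 - 1/20) * real n"
    using of_int_floor_le[of "(45/100) * real n"] unfolding m_def by simp
  then have "1 - exp (-2 * real n * (1/20)\<^sup>2) \<le> measure_pmf.prob (binomial_pmf n (1/2)) {m..}"
    by (intro prob_binomial_pmf_atLeast_ge) auto
  also have "\<dots> = measure_pmf.prob (bitdrop_law n)
                     {(V, T, Y). subseq (bitdrop_Z V T m) (map Y [1..<n+1])}"
    by (rule prob_bitdrop_law_subseq [symmetric])
  also have "\<dots> \<le> measure_pmf.prob (bitdrop_law n) (E1 n)"
    unfolding m_def by (intro measure_pmf.finite_measure_mono subseq_bitdrop_Z_subset_E1) simp
  finally show ?thesis .
qed

theorem lemma6:
  shows "(\<lambda>n. measure_pmf.prob (bitdrop_law n) (E1 n)) \<longlonglongrightarrow> 1"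
proof (rule tendsto_sandwich [of "\<lambda>n. 1 - exp (-2 * real n * (1/20)\<^sup>2)" _ _ "\<lambda>_. 1"])
  show "\<forall>\<^sub>F n in sequentially. 1 - exp (-2 * real n * (1/20)\<^sup>2) \<le> measure_pmf.prob (bitdrop_law n) (E1 n)"
    by (intro always_eventually allI prob_E1_ge)
  show "\<forall>\<^sub>F n in sequentially. measure_pmf.prob (bitdrop_law n) (E1 n) \<le> 1"
    by (simp add: measure_pmf.prob_le_1)
  show "(\<lambda>n. 1 - exp (-2 * real n * (1/20)\<^sup>2)) \<longlonglongrightarrow> 1"
    by real_asymp
qed simp

end
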